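(* Let $d\ge2$, $R=\mathbb{Z}[1/p: p\text{ prime},\,2\le p\le d]$, $S=R[s_1,\dots,s_{d-1}]$ graded by total degree, let \[f_{\mathbf{s}}(x)=\tfrac1dx^d-\tfrac1{d-1}(s_1+\cdots+s_{d-1})x^{d-1}+\cdots+(-1)^{d-1}s_1\cdots s_{d-1}x\in S[x]\] (the polynomial with $f_{\mathbf{s}}(0)=0$ and $f_{\mathbf{s}}'(x)=\prod_i(x-s_i)$), and let $F_i=f_{\mathbf{s}}(s_i)\in S$ for $1\le i\le d-1$. Then there exist an integer $D\ge1$ and elements $A_{ij}\in S$, each homogeneous of degree $D-d$, such that for every $i$, \[s_i^D=\sum_{j=1}^{d-1}A_{ij}F_j.\] *)

theory Defs
  imports "HOL-Library.Poly_Mapping" "HOL-Computational_Algebra.Polynomial"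
    "HOL-Computational_Algebra.Primes"
begin

text \<open>Multivariate polynomials over \<open>\<rat>\<close>: monomials are finitely supported
  exponent vectors \<open>nat \<Rightarrow>\<^sub>0 nat\<close> (variable \<open>s_i\<close> is index \<open>i\<close>).\<close>
type_synonym mpoly = "(nat \<Rightarrow>\<^sub>0 nat) \<Rightarrow>\<^sub>0 rat"

definition Rd :: "nat \<Rightarrow> rat set" where
  "Rd d = {q. \<exists>(a::int) (n::nat). n > 0 \<and> q = of_int a / of_nat n \<and>
                 (\<forall>p. prime p \<longrightarrow> p dvd n \<longrightarrow> p \<le> d)}"

definition in_S :: "nat \<Rightarrow> mpoly \<Rightarrow> bool" where
  "in_S d A \<longleftrightarrow> (\<forall>m \<in> Poly_Mapping.keys A. Poly_Mapping.keys m \<subseteq> {1..d-1} \<and> Poly_Mapping.lookup A m \<in> Rd d)"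

definition tdeg :: "(nat \<Rightarrow>\<^sub>0 nat) \<Rightarrow> nat" where
  "tdeg m = (\<Sum>i\<in>Poly_Mapping.keys m. Poly_Mapping.lookup m i)"

text \<open>Homogeneous of (integer) degree \<open>k\<close>; for \<open>k < 0\<close> only \<open>0\<close> qualifies.\<close>
definition homogeneous :: "int \<Rightarrow> mpoly \<Rightarrow> bool" where
  "homogeneous k A \<longleftrightarrow> (\<forall>m \<in> Poly_Mapping.keys A. int (tdeg m) = k)"

definition var :: "nat \<Rightarrow> mpoly" where
  "var i = Poly_Mapping.single (Poly_Mapping.single i 1) 1"

definition const :: "rat \<Rightarrow> mpoly" where
  "const c = Poly_Mapping.single 0 c"

definition fprime :: "nat \<Rightarrow> mpoly poly" where
  "fprime d = (\<Prod>i\<in>{1..d-1}. [:- var i, 1:])"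

text \<open>\<open>f_s\<close>: the antiderivative of \<open>f_s'\<close> with \<open>f_s(0) = 0\<close>, i.e.
  coefficient of \<open>x^(k+1)\<close> is \<open>1/(k+1)\<close> times the coefficient of \<open>x^k\<close> in \<open>f_s'\<close>.\<close>
definition f_s :: "nat \<Rightarrow> mpoly poly" where
  "f_s d = (\<Sum>k<d. monom (const (1 / of_nat (k+1)) * coeff (fprime d) k) (k+1))"

definition F :: "nat \<Rightarrow> nat \<Rightarrow> mpoly" where
  "F d i = poly (f_s d) (var i)"

end

theory Submission
  imports Defs
begin

text \<open>
  By Krull's lemma it suffices to show that every prime ideal \<open>P\<close> of \<open>S\<close> containing all \<open>F j\<close>
  contains all \<open>s i\<close>: then each \<open>s i\<close> has a power \<open>s i ^ D = \<Sum>j. B i j * F j\<close>, and since \<open>F j\<close> is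
  homogeneous of degree \<open>d\<close>, taking homogeneous parts of degree \<open>D\<close> replaces \<open>B i j\<close> by its part of
  degree \<open>D - d\<close>.

  Modulo \<open>P\<close> (a domain in which \<open>1, ..., d\<close> are invertible), a root of multiplicity \<open>m\<close> of \<open>f'\<close> at
  which \<open>f\<close> vanishes is a root of multiplicity \<open>m + 1\<close> of \<open>f\<close>. Collecting the roots gives
  \<open>f \<equiv> f' q\<close>; comparing degrees, \<open>q \<equiv> (x - c)/d\<close>, and counting multiplicities once more shows
  that every \<open>s j\<close> is a root of \<open>q\<close>, i.e. \<open>s j \<equiv> c\<close>. Hence \<open>f \<equiv> (x - c)^d/d\<close>, and \<open>f(0) = 0\<close>
  forces \<open>c \<equiv> 0\<close>.
\<close>

section \<open>Polynomials modulo a prime ideal of a subring\<close>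

locale subring =
  fixes S :: "'a::idom set"
  assumes zero_closed: "0 \<in> S" and one_closed: "1 \<in> S"
    and add_closed: "a \<in> S \<Longrightarrow> b \<in> S \<Longrightarrow> a + b \<in> S"
    and mult_closed: "a \<in> S \<Longrightarrow> b \<in> S \<Longrightarrow> a * b \<in> S"
    and uminus_closed: "a \<in> S \<Longrightarrow> - a \<in> S"
begin

lemma diff_closed: "a \<in> S \<Longrightarrow> b \<in> S \<Longrightarrow> a - b \<in> S"
  using add_closed[of a "- b"] uminus_closed[of b] by simp

lemma sum_closed: "(\<And>i. i \<in> A \<Longrightarrow> f i \<in> S) \<Longrightarrow> sum f A \<in> S"
  by (induction A rule: infinite_finite_induct) (auto simp: zero_closed add_closed)

lemma prod_closed: "(\<And>i. i \<in> A \<Longrightarrow> f i \<in> S) \<Longrightarrow> prod f A \<in> S"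
  by (induction A rule: infinite_finite_induct) (auto simp: one_closed mult_closed)

lemma power_closed: "a \<in> S \<Longrightarrow> a ^ n \<in> S"
  by (induction n) (auto simp: one_closed mult_closed)

lemma of_nat_closed: "of_nat n \<in> S"
  by (induction n) (auto simp: zero_closed one_closed add_closed)

definition poly_over :: "'a poly \<Rightarrow> bool" where
  "poly_over p \<longleftrightarrow> (\<forall>i. coeff p i \<in> S)"

lemma poly_over_coeff: "poly_over p \<Longrightarrow> coeff p i \<in> S"
  by (simp add: poly_over_def)

lemma poly_over_0 [simp]: "poly_over 0"
  by (simp add: poly_over_def zero_closed)

lemma poly_over_1 [simp]: "poly_over 1"
  by (simp add: poly_over_def coeff_1 zero_closed one_closed)

lemma poly_over_pCons: "a \<in> S \<Longrightarrow> poly_over p \<Longrightarrow> poly_over (pCons a p)"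
  by (auto simp: poly_over_def coeff_pCons split: nat.splits)

lemma poly_over_const: "a \<in> S \<Longrightarrow> poly_over [:a:]"
  by (simp add: poly_over_pCons)

lemma poly_over_linear: "a \<in> S \<Longrightarrow> b \<in> S \<Longrightarrow> poly_over [:a, b:]"
  by (simp add: poly_over_pCons poly_over_const)

lemma poly_over_monic_linear: "r \<in> S \<Longrightarrow> poly_over [:-r, 1:]"
  by (simp add: poly_over_linear uminus_closed one_closed)

lemma poly_over_add: "poly_over p \<Longrightarrow> poly_over q \<Longrightarrow> poly_over (p + q)"
  by (simp add: poly_over_def add_closed)

lemma poly_over_diff: "poly_over p \<Longrightarrow> poly_over q \<Longrightarrow> poly_over (p - q)"
  by (simp add: poly_over_def diff_closed)

lemma poly_over_mult: "poly_over p \<Longrightarrow> poly_over q \<Longrightarrow> poly_over (p * q)"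
  unfolding poly_over_def coeff_mult by (auto intro!: sum_closed mult_closed)

lemma poly_over_smult: "a \<in> S \<Longrightarrow> poly_over p \<Longrightarrow> poly_over (smult a p)"
  by (simp add: poly_over_def mult_closed)

lemma poly_over_monom: "a \<in> S \<Longrightarrow> poly_over (monom a n)"
  by (simp add: poly_over_def coeff_monom zero_closed)

lemma poly_over_power: "poly_over p \<Longrightarrow> poly_over (p ^ n)"
  by (induction n) (auto intro: poly_over_mult)

lemma poly_over_prod: "(\<And>i. i \<in> A \<Longrightarrow> poly_over (f i)) \<Longrightarrow> poly_over (prod f A)"
  by (induction A rule: infinite_finite_induct) (auto intro: poly_over_mult)

lemma poly_over_sum: "(\<And>i. i \<in> A \<Longrightarrow> poly_over (f i)) \<Longrightarrow> poly_over (sum f A)"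
  by (induction A rule: infinite_finite_induct) (auto intro: poly_over_add)

lemma poly_over_pderiv: "poly_over p \<Longrightarrow> poly_over (pderiv p)"
  unfolding poly_over_def coeff_pderiv by (metis mult_closed of_nat_closed)

lemma poly_closed: "poly_over p \<Longrightarrow> x \<in> S \<Longrightarrow> poly p x \<in> S"
  by (induction p) (auto simp: poly_over_def add_closed mult_closed coeff_pCons split: nat.splits)

lemma poly_over_synthetic_div: "poly_over p \<Longrightarrow> c \<in> S \<Longrightarrow> poly_over (synthetic_div p c)"
proof (induction p)
  case (pCons a p)
  have "poly_over p"
    using pCons.prems by (auto simp: poly_over_def coeff_pCons split: nat.splits)
  then show ?case using pCons by (auto intro!: poly_over_pCons poly_closed)
qed simp

end

locale prime_ideal = subring S for S :: "'a::idom set" +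
  fixes P :: "'a set"
  assumes P_subset: "p \<in> P \<Longrightarrow> p \<in> S" and P_zero: "0 \<in> P"
    and P_add: "p \<in> P \<Longrightarrow> q \<in> P \<Longrightarrow> p + q \<in> P"
    and P_mult: "a \<in> S \<Longrightarrow> p \<in> P \<Longrightarrow> a * p \<in> P"
    and one_notin_P: "1 \<notin> P"
    and P_prime: "a \<in> S \<Longrightarrow> b \<in> S \<Longrightarrow> a * b \<in> P \<Longrightarrow> a \<in> P \<or> b \<in> P"
begin

lemma P_uminus_iff: "- p \<in> P \<longleftrightarrow> p \<in> P"
  using P_mult[of "- 1" p] P_mult[of "- 1" "- p"] uminus_closed[OF one_closed] P_subset
  by force

lemma P_diff: "p \<in> P \<Longrightarrow> q \<in> P \<Longrightarrow> p - q \<in> P"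
  using P_add[of p "- q"] P_uminus_iff[of q] by simp

lemma P_diff_commute: "a - b \<in> P \<longleftrightarrow> b - a \<in> P"
  using P_uminus_iff[of "a - b"] by simp

lemma P_sum: "(\<And>i. i \<in> A \<Longrightarrow> f i \<in> P) \<Longrightarrow> sum f A \<in> P"
  by (induction A rule: infinite_finite_induct) (auto simp: P_zero P_add)

lemma P_power_imp: "a \<in> S \<Longrightarrow> a ^ n \<in> P \<Longrightarrow> a \<in> P"
  by (induction n) (use one_notin_P P_prime power_closed in auto)

lemma prod_notin_P:
  "finite A \<Longrightarrow> (\<And>i. i \<in> A \<Longrightarrow> f i \<in> S \<and> f i \<notin> P) \<Longrightarrow> prod f A \<notin> P"
proof (induction A rule: finite_induct)
  case (insert x F)
  then show ?case
    using P_prime[of "f x" "prod f F"] prod_closed[of F f] by auto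
qed (simp add: one_notin_P)

definition coeffs_in_P :: "'a poly \<Rightarrow> bool" where
  "coeffs_in_P p \<longleftrightarrow> (\<forall>i. coeff p i \<in> P)"

lemma coeffs_in_P_add: "coeffs_in_P p \<Longrightarrow> coeffs_in_P q \<Longrightarrow> coeffs_in_P (p + q)"
  by (simp add: coeffs_in_P_def P_add)

lemma coeffs_in_P_uminus_iff: "coeffs_in_P (- p) \<longleftrightarrow> coeffs_in_P p"
  by (simp add: coeffs_in_P_def P_uminus_iff)

lemma coeffs_in_P_mult: "poly_over p \<Longrightarrow> coeffs_in_P q \<Longrightarrow> coeffs_in_P (p * q)"
  unfolding coeffs_in_P_def poly_over_def coeff_mult by (auto intro!: P_sum P_mult)

lemma coeffs_in_P_pderiv: "coeffs_in_P p \<Longrightarrow> coeffs_in_P (pderiv p)"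
  unfolding coeffs_in_P_def coeff_pderiv by (metis P_mult of_nat_closed)

lemma coeffs_in_P_monom: "a \<in> P \<Longrightarrow> coeffs_in_P (monom a n)"
  by (simp add: coeffs_in_P_def coeff_monom P_zero)

lemma poly_in_P: "coeffs_in_P p \<Longrightarrow> x \<in> S \<Longrightarrow> poly p x \<in> P"
  by (induction p)
    (auto simp: coeffs_in_P_def coeff_pCons P_zero split: nat.splits intro!: P_add P_mult)

text \<open>Congruence modulo \<open>P\<close>, i.e. equality in \<open>(S/P)[x]\<close>: it replaces the quotient domain \<open>S/P\<close>,
  since a type cannot depend on the set \<open>P\<close>.\<close>
definition cong :: "'a poly \<Rightarrow> 'a poly \<Rightarrow> bool" (infix "\<approx>" 50) where
  "p \<approx> q \<longleftrightarrow> poly_over p \<and> poly_over q \<and> coeffs_in_P (p - q)"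

lemma cong_refl: "poly_over p \<Longrightarrow> p \<approx> p"
  by (simp add: cong_def coeffs_in_P_def P_zero)

lemma cong_sym: "p \<approx> q \<Longrightarrow> q \<approx> p"
  unfolding cong_def using coeffs_in_P_uminus_iff[of "p - q"] by simp

lemma cong_trans: "p \<approx> q \<Longrightarrow> q \<approx> r \<Longrightarrow> p \<approx> r"
  unfolding cong_def using coeffs_in_P_add[of "p - q" "q - r"] by simp

lemma cong_mult: "p \<approx> q \<Longrightarrow> p' \<approx> q' \<Longrightarrow> p * p' \<approx> q * q'"
proof -
  assume "p \<approx> q" "p' \<approx> q'"
  moreover have "p * p' - q * q' = p * (p' - q') + q' * (p - q)"
    by (simp add: algebra_simps)
  ultimately show ?thesis
    unfolding cong_def by (auto intro!: poly_over_mult coeffs_in_P_add coeffs_in_P_mult)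
qed

lemma cong_mult_left: "poly_over r \<Longrightarrow> p \<approx> q \<Longrightarrow> r * p \<approx> r * q"
  by (simp add: cong_mult cong_refl)

lemma cong_pderiv: "p \<approx> q \<Longrightarrow> pderiv p \<approx> pderiv q"
  unfolding cong_def using coeffs_in_P_pderiv[of "p - q"]
  by (auto intro: poly_over_pderiv simp: pderiv_diff)

lemma cong_prod: "(\<And>i. i \<in> A \<Longrightarrow> f i \<approx> g i) \<Longrightarrow> prod f A \<approx> prod g A"
  by (induction A rule: infinite_finite_induct) (auto intro: cong_mult cong_refl)

lemma cong_poly: "p \<approx> q \<Longrightarrow> x \<in> S \<Longrightarrow> poly p x - poly q x \<in> P"
  unfolding cong_def using poly_in_P[of "p - q" x] by simp

lemma cong_monic_linear: "a \<in> S \<Longrightarrow> b \<in> S \<Longrightarrow> a - b \<in> P \<Longrightarrow> [:-a, 1:] \<approx> [:-b, 1:]"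
  unfolding cong_def coeffs_in_P_def
  by (auto simp: poly_over_monic_linear coeff_pCons P_zero P_diff_commute split: nat.splits)

lemma synthetic_div_cong:
  assumes "poly_over q" "r \<in> S" "poly q r \<in> P"
  shows "q \<approx> [:-r, 1:] * synthetic_div q r"
proof -
  have "q - [:-r, 1:] * synthetic_div q r = [:poly q r:]"
    using synthetic_div_correct'[of r q] by (simp add: algebra_simps)
  moreover have "poly_over ([:-r, 1:] * synthetic_div q r)"
    using assms by (intro poly_over_mult poly_over_synthetic_div poly_over_monic_linear)
  ultimately show ?thesis
    using assms unfolding cong_def
    by (auto simp: coeffs_in_P_def coeff_pCons P_zero split: nat.splits)
qed

end

section \<open>Critical values in a prime ideal\<close>

lemma pderiv_power_mult:
  assumes "pderiv X = 1"
  shows "pderiv (X ^ Suc k * W) = X ^ k * (X * pderiv W + smult (of_nat (Suc k)) W)"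
  by (simp add: pderiv_mult pderiv_power_Suc assms algebra_simps del: of_nat_Suc power_Suc)
    (simp add: algebra_simps)

context prime_ideal
begin

lemma monic_mult_coeffs_in_P:
  assumes G: "lead_coeff G = 1" "poly_over G" and Q: "poly_over Q"
    and GQ: "\<And>i. degree G + k \<le> i \<Longrightarrow> coeff (G * Q) i \<in> P" and "k \<le> i"
  shows "coeff Q i \<in> P"
  using Q GQ \<open>k \<le> i\<close>
proof (induction "degree Q" arbitrary: Q i rule: less_induct)
  case less
  define t where "t = degree Q"
  define a where "a = lead_coeff Q"
  define Q' where "Q' = Q - monom a t"
  show ?case
  proof (cases "t < k")
    case True
    then show ?thesis using less.prems by (simp add: coeff_eq_0 t_def P_zero)
  next
    case False
    have "coeff (G * Q) (degree G + t) = a"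
      using coeff_mult_degree_sum[of G Q] G by (simp add: t_def a_def)
    then have a: "a \<in> P" using False less.prems(2)[of "degree G + t"] by simp
    have "coeffs_in_P (G * monom a t)"
      using G a by (intro coeffs_in_P_mult coeffs_in_P_monom)
    then have GQ': "coeff (G * Q') j \<in> P" if "degree G + k \<le> j" for j
      using less.prems that by (auto simp: Q'_def algebra_simps coeffs_in_P_def intro!: P_diff)
    have Q'_high: "coeff Q' j = 0" if "t \<le> j" for j
      using that by (cases "j = t") (auto simp: Q'_def coeff_monom a_def t_def coeff_eq_0)
    have "coeff Q' i \<in> P"
    proof (cases "Q' = 0")
      case False
      then have "degree Q' < degree Q"
        using Q'_high[of "degree Q'"] by (fastforce simp: t_def)
      moreover have "poly_over Q'"
        using less.prems a by (auto simp: Q'_def intro!: poly_over_diff poly_over_monom P_subset)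
      ultimately show ?thesis using less by (metis GQ')
    qed (simp add: P_zero)
    moreover have "coeff (monom a t) i \<in> P" by (simp add: coeff_monom a P_zero)
    ultimately show ?thesis using P_add by (force simp: Q'_def)
  qed
qed

lemma cancel_monic_cong:
  assumes "lead_coeff G = 1" "poly_over G" "G * p \<approx> G * q" "poly_over p" "poly_over q"
  shows "p \<approx> q"
proof -
  have "coeffs_in_P (G * (p - q))"
    using assms(3) by (simp add: cong_def algebra_simps)
  then have "coeffs_in_P (p - q)"
    using monic_mult_coeffs_in_P[of G "p - q" 0] assms poly_over_diff
    by (simp add: coeffs_in_P_def)
  then show ?thesis using assms by (simp add: cong_def)
qed

lemma prod_monic_linear_cong:
  assumes "finite K" "\<And>j. j \<in> K \<Longrightarrow> s j \<in> S" "r \<in> S"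
  shows "(\<Prod>j\<in>K. [:-s j, 1:]) \<approx>
    [:-r, 1:] ^ card {j\<in>K. s j - r \<in> P} * (\<Prod>j\<in>{j\<in>K. s j - r \<notin> P}. [:-s j, 1:])"
proof -
  let ?A = "{j\<in>K. s j - r \<in> P}" and ?B = "{j\<in>K. s j - r \<notin> P}"
  have "(\<Prod>j\<in>K. [:-s j, 1:]) = (\<Prod>j\<in>?A. [:-s j, 1:]) * (\<Prod>j\<in>?B. [:-s j, 1:])"
    using assms(1) by (subst prod.union_disjoint[symmetric]) (auto intro: prod.cong)
  moreover have "(\<Prod>j\<in>?A. [:-s j, 1:]) \<approx> (\<Prod>j\<in>?A. [:-r, 1:])"
    using assms by (intro cong_prod cong_monic_linear) auto
  moreover have "poly_over (\<Prod>j\<in>?B. [:-s j, 1:])"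
    using assms by (auto intro!: poly_over_prod poly_over_monic_linear)
  ultimately show ?thesis
    by (simp add: cong_mult cong_refl)
qed

lemma poly_prod_monic_linear_notin_P:
  assumes "finite K" "\<And>j. j \<in> K \<Longrightarrow> s j \<in> S" "r \<in> S"
  shows "poly (\<Prod>j\<in>{j\<in>K. s j - r \<notin> P}. [:-s j, 1:]) r \<notin> P"
  unfolding poly_prod using assms
  by (intro prod_notin_P) (auto simp: P_diff_commute diff_closed)

end

text \<open>\<open>f\<close> plays the role of \<open>f_s\<close>, and \<open>inv_nat k\<close> that of \<open>1/k\<close>.\<close>
locale critical_points = subring S for S :: "'a::idom set" +
  fixes d :: nat and inv_nat :: "nat \<Rightarrow> 'a"
    and J :: "'b set" and s :: "'b \<Rightarrow> 'a" and f :: "'a poly"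
  assumes inv_nat: "1 \<le> k \<Longrightarrow> k \<le> d \<Longrightarrow> inv_nat k \<in> S \<and> of_nat k * inv_nat k = 1"
    and finite_J: "finite J" and s_in_S: "j \<in> J \<Longrightarrow> s j \<in> S"
    and card_J: "card J + 1 = d"
    and f_over: "poly_over f" and pderiv_f: "pderiv f = (\<Prod>j\<in>J. [:-s j, 1:])"
    and degree_f: "degree f \<le> d" and f_at_0: "poly f 0 = 0"
begin

lemma inv_nat_unique: "1 \<le> k \<Longrightarrow> k \<le> d \<Longrightarrow> of_nat k * x = 1 \<Longrightarrow> x = inv_nat k"
  using inv_nat[of k] by (metis mult.assoc mult.commute mult_1)

lemma degree_pderiv_f: "degree (pderiv f) = card J"
  unfolding pderiv_f by (subst degree_prod_sum_eq) auto

lemma lead_coeff_pderiv_f: "lead_coeff (pderiv f) = 1"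
  unfolding pderiv_f by (simp add: lead_coeff_prod)

lemma coeff_f_d: "coeff f d = inv_nat d"
  using coeff_pderiv[of f "card J"] lead_coeff_pderiv_f degree_pderiv_f card_J
  by (intro inv_nat_unique) auto

end

locale critical_values_in_prime = critical_points S d inv_nat J s f + prime_ideal S P
  for S :: "'a::idom set" and d inv_nat and J :: "'b set" and s f P +
  assumes critical_values_in_P: "j \<in> J \<Longrightarrow> poly f (s j) \<in> P"
begin

lemma of_nat_mult_in_P_imp:
  assumes "1 \<le> k" "k \<le> d" "a \<in> S" "of_nat k * a \<in> P"
  shows "a \<in> P"
proof -
  have "a = inv_nat k * (of_nat k * a)"
    using inv_nat[OF assms(1,2)] by (metis mult.assoc mult.commute mult_1)
  then show ?thesis using P_mult inv_nat assms by metis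
qed

lemma root_multiplicity_step:
  assumes r: "r \<in> S" and V: "poly_over V" and W: "poly_over W"
    and p': "pderiv p \<approx> [:-r, 1:] ^ e * V" and p: "p \<approx> [:-r, 1:] ^ Suc k * W"
    and "Suc k \<le> e" "e < d"
  shows "poly W r \<in> P"
proof -
  define X where "X = [:-r, 1:]"
  have X: "poly_over X" "\<And>k. poly_over (X ^ k)" "\<And>k. lead_coeff (X ^ k) = 1"
    "pderiv X = 1" "poly X r = 0"
    using r by (auto simp: X_def lead_coeff_power pderiv_pCons intro: poly_over_power poly_over_monic_linear)
  have "e = k + Suc (e - Suc k)"
    using \<open>Suc k \<le> e\<close> by simp
  then have "X ^ k * (X * (X ^ (e - Suc k) * V)) = X ^ e * V"
    by (metis power_add power_Suc mult.assoc)
  then have "pderiv (X ^ Suc k * W) \<approx> X ^ k * (X * (X ^ (e - Suc k) * V))"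
    using cong_trans[OF cong_sym[OF cong_pderiv[OF p]] p'] by (simp add: X_def)
  then have "X ^ k * (X * pderiv W + smult (of_nat (Suc k)) W) \<approx>
      X ^ k * (X * (X ^ (e - Suc k) * V))"
    unfolding pderiv_power_mult[OF X(4)] .
  moreover have "poly_over (X * pderiv W + smult (of_nat (Suc k)) W)"
    "poly_over (X * (X ^ (e - Suc k) * V))"
    using X W V of_nat_closed[of "Suc k"]
    by (auto intro!: poly_over_add poly_over_mult poly_over_pderiv poly_over_smult)
  ultimately have "X * pderiv W + smult (of_nat (Suc k)) W \<approx> X * (X ^ (e - Suc k) * V)"
    by (rule cancel_monic_cong[OF X(3) X(2)])
  from cong_poly[OF this r] have "of_nat (Suc k) * poly W r \<in> P"
    using X(5) by (simp del: of_nat_Suc)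
  then show ?thesis
    using of_nat_mult_in_P_imp[of "Suc k" "poly W r"] poly_closed[OF W r] assms(6,7) by simp
qed

lemma root_multiplicity_Suc:
  assumes p: "poly_over p" and r: "r \<in> S" and pr: "poly p r \<in> P" and V: "poly_over V"
    and p': "pderiv p \<approx> [:-r, 1:] ^ e * V" and e: "e < d"
  shows "\<exists>W. poly_over W \<and> p \<approx> [:-r, 1:] ^ Suc e * W"
proof -
  define X where "X = [:-r, 1:]"
  have "\<exists>W. poly_over W \<and> p \<approx> X ^ Suc k * W" if "k \<le> e" for k
    using that
  proof (induction k)
    case 0
    show ?case using synthetic_div_cong[OF p r pr] poly_over_synthetic_div[OF p r]
      by (auto simp: X_def)
  next
    case (Suc k)
    then obtain W where W: "poly_over W" "p \<approx> X ^ Suc k * W" by auto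
    have "W \<approx> X * synthetic_div W r"
      using root_multiplicity_step[OF r V W(1) p' W(2)[unfolded X_def] Suc.prems e]
        synthetic_div_cong[OF W(1) r] by (simp add: X_def)
    then have "X ^ Suc k * W \<approx> X ^ Suc k * (X * synthetic_div W r)"
      using r by (intro cong_mult_left poly_over_power) (simp_all add: X_def poly_over_monic_linear)
    moreover have "X ^ Suc k * (X * synthetic_div W r) = X ^ Suc (Suc k) * synthetic_div W r"
      by (simp add: mult_ac)
    ultimately have "p \<approx> X ^ Suc (Suc k) * synthetic_div W r"
      using W(2) cong_trans by metis
    then show ?case using poly_over_synthetic_div[OF W(1) r] by blast
  qed
  then show ?thesis using X_def by blast
qed

lemma critical_point_root_multiplicity:
  assumes "k \<in> J"
  shows "\<exists>W. poly_over W \<and> f \<approx> [:-s k, 1:] ^ Suc (card {j\<in>J. s j - s k \<in> P}) * W"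
proof -
  let ?V = "\<Prod>j\<in>{j\<in>J. s j - s k \<notin> P}. [:-s j, 1:]"
  have r: "s k \<in> S" using s_in_S assms by simp
  have "card {j\<in>J. s j - s k \<in> P} < d"
    using card_mono[OF finite_J, of "{j\<in>J. s j - s k \<in> P}"] card_J by auto
  moreover have "poly_over ?V"
    using s_in_S by (auto intro!: poly_over_prod poly_over_monic_linear)
  moreover have "pderiv f \<approx> [:-s k, 1:] ^ card {j\<in>J. s j - s k \<in> P} * ?V"
    using prod_monic_linear_cong[of J s "s k", OF finite_J s_in_S r] by (simp add: pderiv_f)
  ultimately show ?thesis
    using root_multiplicity_Suc[OF f_over r critical_values_in_P[OF assms]] by blast
qed

text \<open>If \<open>s k\<close> occurs \<open>m\<close> times among the \<open>s j\<close> modulo \<open>P\<close>, the product over \<open>K\<close> supplies at most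
  \<open>m\<close> of the \<open>m + 1\<close> factors \<open>x - s k\<close> of \<open>f\<close>; its other factors do not vanish at \<open>s k\<close>.\<close>
lemma cofactor_root:
  assumes "K \<subseteq> J" "k \<in> J" "poly_over q" and f: "f \<approx> (\<Prod>j\<in>K. [:-s j, 1:]) * q"
  shows "poly q (s k) \<in> P"
proof -
  define r where "r = s k"
  define X where "X = [:-r, 1:]"
  define m where "m = card {j\<in>J. s j - r \<in> P}"
  define a where "a = card {j\<in>K. s j - r \<in> P}"
  define U where "U = (\<Prod>j\<in>{j\<in>K. s j - r \<notin> P}. [:-s j, 1:])"
  have r: "r \<in> S" using s_in_S assms(2) by (simp add: r_def)
  have K: "finite K" "\<And>j. j \<in> K \<Longrightarrow> s j \<in> S"
    using assms(1) finite_J s_in_S by (auto intro: finite_subset)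
  have X: "poly_over X" "\<And>i. poly_over (X ^ i)" "\<And>i. lead_coeff (X ^ i) = 1" "poly X r = 0"
    using r by (auto simp: X_def lead_coeff_power intro: poly_over_power poly_over_monic_linear)
  have U: "poly_over U" using K by (auto simp: U_def intro!: poly_over_prod poly_over_monic_linear)
  have "a \<le> m"
    unfolding a_def m_def using assms(1) finite_J by (intro card_mono) auto
  obtain W where W: "poly_over W" "f \<approx> X ^ Suc m * W"
    using critical_point_root_multiplicity[OF assms(2)] by (auto simp: X_def m_def r_def)
  have "f \<approx> X ^ a * U * q"
    using cong_trans[OF f cong_mult[OF prod_monic_linear_cong[OF K r] cong_refl[OF \<open>poly_over q\<close>]]]
    by (simp add: X_def a_def U_def)
  moreover have "Suc m = a + Suc (m - a)"
    using \<open>a \<le> m\<close> by simp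
  then have "X ^ Suc m * W = X ^ a * (X * (X ^ (m - a) * W))"
    by (metis power_add power_Suc mult.assoc)
  ultimately have "X ^ a * (U * q) \<approx> X ^ a * (X * (X ^ (m - a) * W))"
    using cong_trans[OF cong_sym W(2)] by (metis mult.assoc)
  moreover have "poly_over (U * q)" "poly_over (X * (X ^ (m - a) * W))"
    using X U W \<open>poly_over q\<close> by (auto intro!: poly_over_mult)
  ultimately have "U * q \<approx> X * (X ^ (m - a) * W)"
    by (rule cancel_monic_cong[OF X(3) X(2)])
  from cong_poly[OF this r] have "poly U r * poly q r \<in> P"
    using X(4) by simp
  moreover have "poly U r \<notin> P"
    unfolding U_def by (rule poly_prod_monic_linear_notin_P[OF K r])
  ultimately show ?thesis
    using P_prime poly_closed U \<open>poly_over q\<close> r by (auto simp: r_def)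
qed

lemma prod_monic_linear_dvd:
  assumes "K \<subseteq> J"
  shows "\<exists>q. poly_over q \<and> f \<approx> (\<Prod>j\<in>K. [:-s j, 1:]) * q"
  using finite_subset[OF assms finite_J] assms
proof (induction K rule: finite_subset_induct')
  case empty
  show ?case using f_over cong_refl by auto
next
  case (insert k K)
  then obtain q where q: "poly_over q" "f \<approx> (\<Prod>j\<in>K. [:-s j, 1:]) * q" by blast
  have r: "s k \<in> S" using insert s_in_S by blast
  have "q \<approx> [:-s k, 1:] * synthetic_div q (s k)"
    using cofactor_root[OF insert(3) insert(2) q] by (intro synthetic_div_cong q(1) r)
  then have "f \<approx> (\<Prod>j\<in>K. [:-s j, 1:]) * ([:-s k, 1:] * synthetic_div q (s k))"
    using q insert s_in_S
    by (auto intro!: cong_trans[OF q(2)] cong_mult_left poly_over_prod poly_over_monic_linear)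
  moreover have "(\<Prod>j\<in>K. [:-s j, 1:]) * ([:-s k, 1:] * synthetic_div q (s k)) =
      (\<Prod>j\<in>insert k K. [:-s j, 1:]) * synthetic_div q (s k)"
    by (simp only: prod.insert[OF insert(1,4)] mult_ac)
  ultimately show ?case
    using poly_over_synthetic_div[OF q(1) r] by auto
qed

lemma cofactor_linear:
  assumes q: "poly_over q" and f: "f \<approx> pderiv f * q"
  shows "q \<approx> [:coeff q 0, inv_nat d:]"
proof -
  let ?G = "pderiv f"
  let ?L = "[:coeff q 0, coeff q 1:]"
  have G: "poly_over ?G" "lead_coeff ?G = 1" "degree ?G + 1 = d"
    using f_over lead_coeff_pderiv_f degree_pderiv_f card_J by (auto intro: poly_over_pderiv)
  have "coeffs_in_P (?G * q - f)"
    using f coeffs_in_P_uminus_iff[of "f - ?G * q"] by (simp add: cong_def)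
  then have "coeff (?G * q) i \<in> P" if "degree ?G + 2 \<le> i" for i
    using that degree_f G(3) by (auto simp: coeffs_in_P_def coeff_eq_0 dest: spec[of _ i])
  then have high: "coeff q i \<in> P" if "2 \<le> i" for i
    using that by (intro monic_mult_coeffs_in_P[OF G(2,1) q]) auto
  have "coeffs_in_P (q - ?L)"
    using high by (auto simp: coeffs_in_P_def coeff_pCons P_zero split: nat.splits)
  then have qL: "q \<approx> ?L"
    using q by (simp add: cong_def poly_over_coeff poly_over_linear)
  have "?G * ?L = smult (coeff q 0) ?G + pCons 0 (smult (coeff q 1) ?G)"
    by (simp add: algebra_simps)
  then have "coeff (?G * ?L) d = coeff q 1"
    using G by (auto simp: coeff_eq_0 simp flip: G(3))
  moreover have "f \<approx> ?G * ?L"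
    using cong_trans[OF f cong_mult_left[OF G(1) qL]] .
  ultimately have "inv_nat d - coeff q 1 \<in> P"
    using coeff_f_d unfolding cong_def coeffs_in_P_def by (metis coeff_diff)
  then have "?L \<approx> [:coeff q 0, inv_nat d:]"
    using q inv_nat[of d] card_J
    by (auto simp: cong_def coeffs_in_P_def coeff_pCons P_zero P_diff_commute poly_over_coeff
        poly_over_linear split: nat.splits)
  then show ?thesis using cong_trans[OF qL] by blast
qed

lemma critical_points_cong_common_root:
  obtains c where "c \<in> S" "\<And>j. j \<in> J \<Longrightarrow> s j - c \<in> P"
    "f \<approx> smult (inv_nat d) ([:-c, 1:] ^ d)"
proof -
  let ?G = "\<Prod>j\<in>J. [:-s j, 1:]"
  obtain q where q: "poly_over q" "f \<approx> ?G * q"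
    using prod_monic_linear_dvd by blast
  define c where "c = - (of_nat d * coeff q 0)"
  have d: "inv_nat d \<in> S" "of_nat d * inv_nat d = 1"
    using card_J inv_nat[of d] by auto
  have c: "c \<in> S"
    using q by (simp add: c_def poly_over_coeff uminus_closed mult_closed of_nat_closed)
  have "q \<approx> [:coeff q 0, inv_nat d:]"
    using cofactor_linear q by (simp add: pderiv_f)
  moreover have "[:coeff q 0, inv_nat d:] = smult (inv_nat d) [:-c, 1:]"
    using d by (simp add: c_def mult.assoc[symmetric] mult.commute[of "inv_nat d"])
  ultimately have qc: "q \<approx> smult (inv_nat d) [:-c, 1:]"
    by simp
  have sc: "s i - c \<in> P" if "i \<in> J" for i
  proof -
    from P_diff[OF cofactor_root[OF order_refl that q] cong_poly[OF qc s_in_S[OF that]]]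
    have "inv_nat d * (s i - c) \<in> P"
      by (simp add: algebra_simps)
    then have "of_nat d * (inv_nat d * (s i - c)) \<in> P"
      by (rule P_mult[OF of_nat_closed])
    then show ?thesis
      using d by (simp add: mult.assoc[symmetric])
  qed
  have "?G \<approx> (\<Prod>j\<in>J. [:-c, 1:])"
    using sc s_in_S c by (intro cong_prod cong_monic_linear) auto
  then have "f \<approx> [:-c, 1:] ^ card J * smult (inv_nat d) [:-c, 1:]"
    using cong_trans[OF q(2) cong_mult[OF _ qc]] by simp
  moreover have "[:-c, 1:] ^ card J * smult (inv_nat d) [:-c, 1:] = smult (inv_nat d) ([:-c, 1:] ^ d)"
    using card_J by (metis mult_smult_right power_Suc2 Suc_eq_plus1)
  ultimately show thesis
    using that c sc by simp
qed

theorem critical_points_in_P: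
  assumes "j \<in> J"
  shows "s j \<in> P"
proof -
  obtain c where c: "c \<in> S" "\<And>j. j \<in> J \<Longrightarrow> s j - c \<in> P"
    and f: "f \<approx> smult (inv_nat d) ([:-c, 1:] ^ d)"
    using critical_points_cong_common_root by blast
  from cong_poly[OF f zero_closed] have "inv_nat d * (- c) ^ d \<in> P"
    using f_at_0 P_uminus_iff by simp
  then have "of_nat d * (inv_nat d * (- c) ^ d) \<in> P"
    by (rule P_mult[OF of_nat_closed])
  then have "(- c) ^ d \<in> P"
    using inv_nat[of d] card_J by (simp add: mult.assoc[symmetric])
  then have "c \<in> P"
    using P_power_imp[of "- c" d] c(1) P_uminus_iff by (simp add: uminus_closed)
  then show ?thesis
    using P_add[OF c(2)[OF assms]] by fastforce
qed

end

section \<open>Prime ideals avoiding the powers of an element\<close>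

context subring
begin

definition ideal :: "'a set \<Rightarrow> bool" where
  "ideal I \<longleftrightarrow> I \<subseteq> S \<and> 0 \<in> I \<and> (\<forall>a\<in>I. \<forall>b\<in>I. a + b \<in> I) \<and> (\<forall>t\<in>S. \<forall>a\<in>I. t * a \<in> I)"

lemma ideal_subset: "ideal I \<Longrightarrow> a \<in> I \<Longrightarrow> a \<in> S"
  and ideal_zero: "ideal I \<Longrightarrow> 0 \<in> I"
  and ideal_add: "ideal I \<Longrightarrow> a \<in> I \<Longrightarrow> b \<in> I \<Longrightarrow> a + b \<in> I"
  and ideal_mult: "ideal I \<Longrightarrow> t \<in> S \<Longrightarrow> a \<in> I \<Longrightarrow> t * a \<in> I"
  by (auto simp: ideal_def)

lemma ideal_mult_right: "ideal I \<Longrightarrow> t \<in> S \<Longrightarrow> a \<in> I \<Longrightarrow> a * t \<in> I"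
  using ideal_mult[of I t a] by (simp add: mult.commute)

lemma ideal_add_multiples:
  assumes I: "ideal I" and a: "a \<in> S"
  shows "ideal {p + t * a | p t. p \<in> I \<and> t \<in> S}" (is "ideal ?I'")
  unfolding ideal_def
proof (intro conjI ballI subsetI)
  fix u assume "u \<in> ?I'"
  then obtain p t where "u = p + t * a" "p \<in> I" "t \<in> S" by blast
  then show "u \<in> S"
    using a ideal_subset[OF I] by (simp add: add_closed mult_closed)
next
  have "0 = 0 + 0 * a" by simp
  then show "0 \<in> ?I'"
    using ideal_zero[OF I] zero_closed by blast
next
  fix u v assume "u \<in> ?I'" "v \<in> ?I'"
  then obtain p t p' t' where "u = p + t * a" "v = p' + t' * a" "p \<in> I" "t \<in> S" "p' \<in> I" "t' \<in> S"
    by blast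
  moreover have "u + v = (p + p') + (t + t') * a"
    using calculation by (simp add: algebra_simps)
  ultimately show "u + v \<in> ?I'"
    using ideal_add[OF I] add_closed by blast
next
  fix w u assume "w \<in> S" "u \<in> ?I'"
  then obtain p t where "w \<in> S" "u = p + t * a" "p \<in> I" "t \<in> S"
    by blast
  moreover have "w * u = w * p + (w * t) * a"
    using calculation by (simp add: algebra_simps)
  ultimately show "w * u \<in> ?I'"
    using ideal_mult[OF I] mult_closed by blast
qed

lemma ideal_Union_chain:
  assumes "\<C> \<noteq> {}" and ideals: "\<And>I. I \<in> \<C> \<Longrightarrow> ideal I"
    and chain: "\<And>I I'. I \<in> \<C> \<Longrightarrow> I' \<in> \<C> \<Longrightarrow> I \<subseteq> I' \<or> I' \<subseteq> I"
  shows "ideal (\<Union>\<C>)"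
  unfolding ideal_def
proof (intro conjI ballI)
  show "\<Union>\<C> \<subseteq> S"
    using ideals ideal_subset by blast
  show "0 \<in> \<Union>\<C>"
    using assms(1) ideals ideal_zero by blast
next
  fix a b assume "a \<in> \<Union>\<C>" "b \<in> \<Union>\<C>"
  then obtain I I' where "I \<in> \<C>" "a \<in> I" "I' \<in> \<C>" "b \<in> I'" by blast
  then have "a + b \<in> I \<or> a + b \<in> I'"
    using chain[of I I'] ideal_add[OF ideals[of I]] ideal_add[OF ideals[of I']] by blast
  then show "a + b \<in> \<Union>\<C>"
    using \<open>I \<in> \<C>\<close> \<open>I' \<in> \<C>\<close> by blast
next
  fix t a assume "t \<in> S" "a \<in> \<Union>\<C>"
  then show "t * a \<in> \<Union>\<C>"
    using ideals ideal_mult by blast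
qed

lemma prime_ideal_if_maximal_avoiding_powers:
  assumes M: "ideal M" and x: "x \<in> S" and powers: "\<And>k. x ^ k \<notin> M"
    and maximal: "\<And>M'. ideal M' \<Longrightarrow> M \<subseteq> M' \<Longrightarrow> \<forall>k. x ^ k \<notin> M' \<Longrightarrow> M' = M"
  shows "prime_ideal S M"
proof -
  have power_in_extension: "\<exists>k t p. p \<in> M \<and> t \<in> S \<and> x ^ k = p + t * a" if "a \<in> S" "a \<notin> M" for a
  proof (rule ccontr)
    let ?M' = "{p + t * a | p t. p \<in> M \<and> t \<in> S}"
    assume "\<nexists>k t p. p \<in> M \<and> t \<in> S \<and> x ^ k = p + t * a"
    moreover have "M \<subseteq> ?M'"
      using zero_closed by force
    moreover have "a \<in> ?M'"
      using zero_closed one_closed M by (force simp: ideal_def)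
    ultimately show False
      using maximal[OF ideal_add_multiples[OF M that(1)]] that(2) by blast
  qed
  show ?thesis
  proof unfold_locales
    show "p \<in> M \<Longrightarrow> p \<in> S" "0 \<in> M" "p \<in> M \<Longrightarrow> q \<in> M \<Longrightarrow> p + q \<in> M"
      "a \<in> S \<Longrightarrow> p \<in> M \<Longrightarrow> a * p \<in> M" for p q a
      using M by (auto simp: ideal_def)
    show "1 \<notin> M" using powers[of 0] by simp
    show "a \<in> M \<or> b \<in> M" if ab: "a \<in> S" "b \<in> S" "a * b \<in> M" for a b
    proof (rule ccontr)
      assume "\<not> (a \<in> M \<or> b \<in> M)"
      then obtain k t p l t' p' where
        p: "p \<in> M" "t \<in> S" "x ^ k = p + t * a" and p': "p' \<in> M" "t' \<in> S" "x ^ l = p' + t' * b"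
        using power_in_extension[of a] power_in_extension[of b] ab(1,2) by blast
      have "x ^ (k + l) = p * x ^ l + p' * (t * a) + (t * t') * (a * b)"
        using p(3) p'(3) by (simp add: power_add algebra_simps)
      also have "\<dots> \<in> M"
        using ideal_mult_right[OF M power_closed[OF x] p(1)]
          ideal_mult_right[OF M mult_closed[OF p(2) ab(1)] p'(1)]
          ideal_mult[OF M mult_closed[OF p(2) p'(2)] ab(3)]
        by (intro ideal_add[OF M])
      finally show False using powers by blast
    qed
  qed
qed

lemma prime_ideal_avoiding_powers:
  assumes I: "ideal I" and x: "x \<in> S" and powers: "\<And>k. x ^ k \<notin> I"
  shows "\<exists>P. prime_ideal S P \<and> I \<subseteq> P \<and> x \<notin> P"
proof -
  define \<A> where "\<A> = {M. ideal M \<and> I \<subseteq> M \<and> (\<forall>k. x ^ k \<notin> M)}"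
  have "\<Union>\<C> \<in> \<A>" if "\<C> \<noteq> {}" "subset.chain \<A> \<C>" for \<C>
    using that ideal_Union_chain[of \<C>] unfolding \<A>_def subset_chain_def by blast
  then obtain M where M: "M \<in> \<A>" and max: "\<And>M'. M' \<in> \<A> \<Longrightarrow> M \<subseteq> M' \<Longrightarrow> M' = M"
    using subset_Zorn_nonempty[of \<A>] I powers by (auto simp: \<A>_def)
  then have "prime_ideal S M"
    by (intro prime_ideal_if_maximal_avoiding_powers[OF _ x]) (auto simp: \<A>_def)
  moreover have "x \<notin> M" "I \<subseteq> M"
    using M by (auto simp: \<A>_def dest: spec[of _ 1])
  ultimately show ?thesis by blast
qed

end

context critical_points
begin

lemma critical_points_nilpotent:
  assumes I: "ideal I" and "\<And>j. j \<in> J \<Longrightarrow> poly f (s j) \<in> I" and "j \<in> J"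
  shows "\<exists>k. s j ^ k \<in> I"
proof (rule ccontr)
  assume "\<nexists>k. s j ^ k \<in> I"
  then obtain P where P: "prime_ideal S P" "I \<subseteq> P" "s j \<notin> P"
    using prime_ideal_avoiding_powers[OF I s_in_S[OF \<open>j \<in> J\<close>]] by blast
  interpret critical_values_in_prime S d inv_nat J s f P
    using assms(2) P(2)
    by (intro critical_values_in_prime.intro[OF critical_points_axioms P(1)]
        critical_values_in_prime_axioms.intro) blast
  show False using critical_points_in_P[OF \<open>j \<in> J\<close>] P(3) by blast
qed

end

section \<open>The polynomial ring \<open>S\<close> over \<open>R\<close>\<close>

lemma update_eq_add_single:
  "a \<notin> Poly_Mapping.keys f \<Longrightarrow> Poly_Mapping.update a b f = f + Poly_Mapping.single a b"
  by (intro poly_mapping_eqI) (auto simp: lookup_update lookup_add lookup_single when_def in_keys_iff)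

lemma Rd_of_int: "of_int a \<in> Rd d"
  unfolding Rd_def by (intro CollectI exI[of _ a] exI[of _ 1]) auto

lemma Rd_inverse_of_nat:
  assumes "1 \<le> k" "k \<le> d"
  shows "1 / of_nat k \<in> Rd d"
  unfolding Rd_def using assms
  by (intro CollectI exI[of _ "1::int"] exI[of _ k]) (auto dest: dvd_imp_le)

lemma Rd_add_mult:
  assumes "x \<in> Rd d" "y \<in> Rd d"
  shows "x + y \<in> Rd d" "x * y \<in> Rd d"
proof -
  obtain a n b m where x: "n > 0" "x = of_int a / of_nat n" "\<forall>p. prime p \<longrightarrow> p dvd n \<longrightarrow> p \<le> d"
    and y: "m > 0" "y = of_int b / of_nat m" "\<forall>p. prime p \<longrightarrow> p dvd m \<longrightarrow> p \<le> d"
    using assms unfolding Rd_def by blast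
  have nm: "n * m > 0" "\<forall>p. prime p \<longrightarrow> p dvd n * m \<longrightarrow> p \<le> d"
    using x y by (auto simp: prime_dvd_mult_iff)
  have "x + y = of_int (a * int m + b * int n) / of_nat (n * m)"
    using x y by (simp add: add_frac_eq)
  then show "x + y \<in> Rd d"
    using nm unfolding Rd_def by blast
  have "x * y = of_int (a * b) / of_nat (n * m)"
    using x y by simp
  then show "x * y \<in> Rd d"
    using nm unfolding Rd_def by blast
qed

lemma Rd_uminus: "x \<in> Rd d \<Longrightarrow> - x \<in> Rd d"
  using Rd_add_mult(2)[OF Rd_of_int[of "-1"]] by simp

lemma in_S_iff:
  "in_S d A \<longleftrightarrow> (\<forall>m. Poly_Mapping.lookup A m \<in> Rd d) \<and> (\<forall>m \<in> Poly_Mapping.keys A. Poly_Mapping.keys m \<subseteq> {1..d-1})"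
  unfolding in_S_def using Rd_of_int[of 0] by (auto simp: in_keys_iff)

lemma in_S_0: "in_S d 0"
  by (simp add: in_S_def)

lemma in_S_single: "c \<in> Rd d \<Longrightarrow> Poly_Mapping.keys m \<subseteq> {1..d-1} \<Longrightarrow> in_S d (Poly_Mapping.single m c)"
  by (simp add: in_S_def)

lemma in_S_add: "in_S d A \<Longrightarrow> in_S d B \<Longrightarrow> in_S d (A + B)"
  unfolding in_S_iff using keys_add[of A B] by (simp add: lookup_add Rd_add_mult) blast

lemma in_S_uminus: "in_S d A \<Longrightarrow> in_S d (- A)"
  by (simp add: in_S_def Rd_uminus)

lemma in_S_induct [consumes 1, case_names zero monom add]:
  assumes "in_S d A" and "Q 0"
    and monom: "\<And>m c. c \<in> Rd d \<Longrightarrow> Poly_Mapping.keys m \<subseteq> {1..d-1} \<Longrightarrow> Q (Poly_Mapping.single m c)"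
    and add: "\<And>A B. Q A \<Longrightarrow> Q B \<Longrightarrow> Q (A + B)"
  shows "Q A"
proof -
  have "in_S d A \<longrightarrow> Q A"
  proof (induction A rule: update_induct)
    case (update f a b)
    show ?case
    proof
      assume "in_S d (Poly_Mapping.update a b f)"
      then have lookups: "\<And>m. (if a = m then b else Poly_Mapping.lookup f m) \<in> Rd d"
        and keys: "\<And>m. m \<in> insert a (Poly_Mapping.keys f) \<Longrightarrow> Poly_Mapping.keys m \<subseteq> {1..d-1}"
        using update(2) unfolding in_S_iff by (simp_all add: lookup_update keys_update) blast
      have "Poly_Mapping.lookup f m \<in> Rd d" for m
        using lookups[of m] update(1) Rd_of_int[of 0] by (cases "a = m") (auto simp: in_keys_iff)
      then have "in_S d f" "b \<in> Rd d" "Poly_Mapping.keys a \<subseteq> {1..d-1}"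
        using keys lookups[of a] unfolding in_S_iff by auto
      then show "Q (Poly_Mapping.update a b f)"
        using update(3) by (simp add: update_eq_add_single[OF update(1)] add monom)
    qed
  qed (simp add: \<open>Q 0\<close>)
  then show ?thesis using assms(1) by blast
qed

lemma in_S_mult:
  assumes "in_S d A" "in_S d B"
  shows "in_S d (A * B)"
  using assms(1)
proof (induction rule: in_S_induct)
  case (monom m c)
  show ?case
    using assms(2)
  proof (induction rule: in_S_induct)
    case (monom m' c')
    have "Poly_Mapping.keys (m + m') \<subseteq> {1..d-1}"
      using monom keys_add[of m m'] \<open>Poly_Mapping.keys m \<subseteq> {1..d-1}\<close> by blast
    then show ?case
      using \<open>c \<in> Rd d\<close> monom by (simp add: mult_single in_S_single Rd_add_mult(2))
  qed (simp_all add: in_S_0 in_S_add distrib_left)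
qed (simp_all add: in_S_0 in_S_add distrib_right)

lemma subring_S: "subring {A. in_S d A}"
  using in_S_single[OF Rd_of_int[of 1], of 0 d]
  by unfold_locales (auto simp: in_S_0 in_S_add in_S_mult in_S_uminus)

lemma in_S_var: "i \<in> {1..d-1} \<Longrightarrow> in_S d (var i)"
  unfolding var_def using Rd_of_int[of 1] by (intro in_S_single) auto

lemma in_S_const: "c \<in> Rd d \<Longrightarrow> in_S d (const c)"
  unfolding const_def by (rule in_S_single) auto

lemma const_inverse_of_nat: "1 \<le> k \<Longrightarrow> (of_nat k :: mpoly) * const (1 / of_nat k) = 1"
  unfolding const_def single_of_nat[symmetric] mult_single by simp

lemma poly_over_fprime: "subring.poly_over {A. in_S d A} (fprime d)"
proof -
  interpret subring "{A. in_S d A}" by (rule subring_S)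
  show ?thesis unfolding fprime_def
    by (intro poly_over_prod poly_over_monic_linear) (auto intro: in_S_var)
qed

lemma degree_fprime: "degree (fprime d) = d - 1"
  unfolding fprime_def by (subst degree_prod_sum_eq) auto

lemma pderiv_f_s:
  assumes "1 \<le> d"
  shows "pderiv (f_s d) = fprime d"
proof -
  have "pderiv (f_s d) = (\<Sum>k<d. pderiv (monom (const (1 / of_nat (k + 1)) * coeff (fprime d) k) (k + 1)))"
    unfolding f_s_def using higher_pderiv_sum[of 1] by simp
  also have "\<dots> = (\<Sum>k<d. monom (coeff (fprime d) k) k)"
  proof (intro sum.cong refl)
    fix k
    show "pderiv (monom (const (1 / of_nat (k + 1)) * coeff (fprime d) k) (k + 1)) =
        monom (coeff (fprime d) k) k"
      using const_inverse_of_nat[of "k + 1"]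
      by (simp only: pderiv_monom mult.assoc[symmetric]) simp
  qed
  also have "\<dots> = (\<Sum>k\<le>d - 1. monom (coeff (fprime d) k) k)"
    using assms by (intro sum.cong) auto
  also have "\<dots> = fprime d"
    by (rule poly_as_sum_of_monoms') (simp add: degree_fprime)
  finally show ?thesis .
qed

lemma degree_f_s: "degree (f_s d) \<le> d"
  unfolding f_s_def by (rule degree_sum_le) (auto intro: order.trans[OF degree_monom_le])

lemma poly_f_s_0: "poly (f_s d) 0 = 0"
  unfolding f_s_def poly_0_coeff_0 coeff_sum by (simp add: coeff_monom)

lemma poly_over_f_s: "subring.poly_over {A. in_S d A} (f_s d)"
proof -
  interpret subring "{A. in_S d A}" by (rule subring_S)
  have "in_S d (const (1 / of_nat (k + 1)) * coeff (fprime d) k)" if "k < d" for k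
    using that poly_over_coeff[OF poly_over_fprime] Rd_inverse_of_nat[of "k + 1" d]
    by (auto intro!: in_S_mult in_S_const)
  then show ?thesis
    unfolding f_s_def by (auto intro!: poly_over_sum poly_over_monom)
qed

lemma critical_points_f_s:
  assumes "2 \<le> d"
  shows "critical_points {A. in_S d A} d (\<lambda>k. const (1 / of_nat k)) {1..d-1} var (f_s d)"
proof (rule critical_points.intro[OF subring_S], unfold_locales)
  show "const (1 / of_nat k) \<in> {A. in_S d A} \<and> of_nat k * const (1 / of_nat k) = 1"
    if "1 \<le> k" "k \<le> d" for k
    using that by (auto intro!: in_S_const Rd_inverse_of_nat const_inverse_of_nat)
  show "pderiv (f_s d) = (\<Prod>j\<in>{1..d-1}. [:- var j, 1:])"
    using pderiv_f_s assms by (simp add: fprime_def)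
qed (use assms in \<open>auto intro: in_S_var degree_f_s poly_f_s_0 poly_over_f_s\<close>)

section \<open>Homogeneous components\<close>

lemma tdeg_add: "tdeg (a + b) = tdeg a + tdeg b"
proof -
  define K where "K = Poly_Mapping.keys a \<union> Poly_Mapping.keys b"
  have tdeg_K: "tdeg m = (\<Sum>i\<in>K. Poly_Mapping.lookup m i)" if "Poly_Mapping.keys m \<subseteq> K" for m
    unfolding tdeg_def using that by (intro sum.mono_neutral_left) (auto simp: K_def in_keys_iff)
  have "tdeg (a + b) = (\<Sum>i\<in>K. Poly_Mapping.lookup (a + b) i)"
    using keys_add[of a b] by (intro tdeg_K) (auto simp: K_def)
  also have "\<dots> = tdeg a + tdeg b"
    by (simp add: lookup_add sum.distrib tdeg_K K_def)
  finally show ?thesis .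
qed

lemma homogeneous_0: "homogeneous e 0"
  by (simp add: homogeneous_def)

lemma homogeneous_1: "homogeneous 0 1"
  by (simp add: homogeneous_def tdeg_def)

lemma homogeneous_var: "homogeneous 1 (var i)"
  by (simp add: homogeneous_def var_def tdeg_def)

lemma homogeneous_const: "homogeneous 0 (const c)"
  by (simp add: homogeneous_def const_def tdeg_def)

lemma homogeneous_add: "homogeneous e X \<Longrightarrow> homogeneous e Y \<Longrightarrow> homogeneous e (X + Y)"
  unfolding homogeneous_def using keys_add[of X Y] by blast

lemma homogeneous_uminus: "homogeneous e X \<Longrightarrow> homogeneous e (- X)"
  by (simp add: homogeneous_def)

lemma homogeneous_sum: "(\<And>i. i \<in> A \<Longrightarrow> homogeneous e (f i)) \<Longrightarrow> homogeneous e (sum f A)"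
  by (induction A rule: infinite_finite_induct) (auto intro: homogeneous_add homogeneous_0)

lemma homogeneous_mult: "homogeneous a X \<Longrightarrow> homogeneous b Y \<Longrightarrow> homogeneous (a + b) (X * Y)"
  unfolding homogeneous_def using keys_mult[of X Y] by (fastforce simp: tdeg_add)

lemma homogeneous_power: "homogeneous a X \<Longrightarrow> homogeneous (int n * a) (X ^ n)"
  by (induction n) (auto simp: homogeneous_1 algebra_simps dest: homogeneous_mult)

text \<open>Homogeneity of \<open>p \<in> S[x]\<close> of total degree \<open>N\<close>, where \<open>x\<close> counts with degree 1.\<close>
definition coeffs_homogeneous :: "nat \<Rightarrow> mpoly poly \<Rightarrow> bool" where
  "coeffs_homogeneous N p \<longleftrightarrow> (\<forall>k. homogeneous (int N - int k) (coeff p k))"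

lemma coeffs_homogeneous_mult:
  assumes "coeffs_homogeneous N p" "coeffs_homogeneous M q"
  shows "coeffs_homogeneous (N + M) (p * q)"
  unfolding coeffs_homogeneous_def coeff_mult
proof (intro allI homogeneous_sum)
  fix k i :: nat assume "i \<in> {..k}"
  then have "int (N + M) - int k = (int N - int i) + (int M - int (k - i))" by auto
  then show "homogeneous (int (N + M) - int k) (coeff p i * coeff q (k - i))"
    using assms homogeneous_mult unfolding coeffs_homogeneous_def by metis
qed

lemma coeffs_homogeneous_fprime: "coeffs_homogeneous (d - 1) (fprime d)"
proof -
  have "coeffs_homogeneous (card A) (\<Prod>i\<in>A. [:- var i, 1:])" if "finite A" for A :: "nat set"
    using that
  proof (induction A rule: finite_induct)
    case empty
    then show ?case
      by (auto simp: coeffs_homogeneous_def coeff_1 homogeneous_1 homogeneous_0)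
  next
    case (insert i A)
    have "coeffs_homogeneous 1 [:- var i, 1:]"
      unfolding coeffs_homogeneous_def
      by (auto simp: coeff_pCons homogeneous_uminus homogeneous_var homogeneous_1 homogeneous_0
          split: nat.splits)
    with insert show ?case
      using coeffs_homogeneous_mult by fastforce
  qed
  from this[of "{1..d-1}"] show ?thesis unfolding fprime_def by simp
qed

lemma homogeneous_F:
  assumes "1 \<le> d"
  shows "homogeneous (int d) (F d j)"
  unfolding F_def f_s_def poly_sum poly_monom
proof (rule homogeneous_sum)
  fix k assume "k \<in> {..<d}"
  then have "int d = (0 + (int (d - 1) - int k)) + int (k + 1) * 1"
    using assms by simp
  then show "homogeneous (int d) (const (1 / of_nat (k + 1)) * coeff (fprime d) k * var j ^ (k + 1))"
    using homogeneous_mult[OF homogeneous_mult[OF homogeneous_const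
          coeffs_homogeneous_fprime[unfolded coeffs_homogeneous_def, rule_format]]
        homogeneous_power[OF homogeneous_var]]
    by metis
qed

definition homogeneous_part :: "int \<Rightarrow> mpoly \<Rightarrow> mpoly" where
  "homogeneous_part e A = (\<Sum>m\<in>{m \<in> Poly_Mapping.keys A. int (tdeg m) = e}.
     Poly_Mapping.single m (Poly_Mapping.lookup A m))"

lemma lookup_homogeneous_part:
  "Poly_Mapping.lookup (homogeneous_part e A) m =
    (if int (tdeg m) = e then Poly_Mapping.lookup A m else 0)"
  unfolding homogeneous_part_def lookup_sum
  by (simp add: lookup_single when_def in_keys_iff sum.delta')

lemma homogeneous_part_add: "homogeneous_part e (A + B) = homogeneous_part e A + homogeneous_part e B"
  by (rule poly_mapping_eqI) (simp add: lookup_homogeneous_part lookup_add)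

lemma homogeneous_part_sum: "homogeneous_part e (sum f A) = (\<Sum>x\<in>A. homogeneous_part e (f x))"
proof (induction A rule: infinite_finite_induct)
  case (infinite A)
  then show ?case by (simp add: poly_mapping_eqI lookup_homogeneous_part)
qed (auto simp: homogeneous_part_add poly_mapping_eqI lookup_homogeneous_part)

lemma homogeneous_part_eq:
  "homogeneous e' X \<Longrightarrow> homogeneous_part e X = (if e' = e then X else 0)"
  unfolding homogeneous_def
  by (intro poly_mapping_eqI) (auto simp: lookup_homogeneous_part in_keys_iff)

lemma homogeneous_homogeneous_part: "homogeneous e (homogeneous_part e A)"
  unfolding homogeneous_def by (auto simp: in_keys_iff lookup_homogeneous_part split: if_splits)

lemma in_S_homogeneous_part: "in_S d A \<Longrightarrow> in_S d (homogeneous_part e A)"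
  unfolding in_S_iff using Rd_of_int[of 0]
  by (auto simp: lookup_homogeneous_part in_keys_iff split: if_splits)

lemma homogeneous_part_mult_homogeneous:
  assumes "homogeneous (int k) G"
  shows "homogeneous_part (int D) (B * G) = homogeneous_part (int D - int k) B * G"
proof (induction B rule: update_induct)
  case (update f a b)
  have "homogeneous (int (tdeg a)) (Poly_Mapping.single a b)"
    by (simp add: homogeneous_def)
  then show ?case
    using update(3) homogeneous_mult[OF _ assms, of "int (tdeg a)" "Poly_Mapping.single a b"]
    by (simp add: update_eq_add_single[OF update(1)] distrib_right homogeneous_part_add
        homogeneous_part_eq)
qed (simp add: homogeneous_part_def)

lemma homogeneous_part_combination:
  assumes "homogeneous (int D) X" "\<And>j. j \<in> J \<Longrightarrow> homogeneous (int k) (G j)"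
    and "X = (\<Sum>j\<in>J. B j * G j)"
  shows "X = (\<Sum>j\<in>J. homogeneous_part (int D - int k) (B j) * G j)"
proof -
  have "X = homogeneous_part (int D) X"
    using homogeneous_part_eq[OF assms(1)] by simp
  also have "\<dots> = (\<Sum>j\<in>J. homogeneous_part (int D - int k) (B j) * G j)"
    unfolding assms(3) homogeneous_part_sum
    using assms(2) by (intro sum.cong refl homogeneous_part_mult_homogeneous)
  finally show ?thesis .
qed

section \<open>The ideal generated by the critical values\<close>

definition F_ideal :: "nat \<Rightarrow> mpoly set" where
  "F_ideal d = {\<Sum>j\<in>{1..d-1}. B j * F d j | B. \<forall>j\<in>{1..d-1}. in_S d (B j)}"

lemma in_S_F: "j \<in> {1..d-1} \<Longrightarrow> in_S d (F d j)"
  using subring.poly_closed[OF subring_S poly_over_f_s] in_S_var by (simp add: F_def)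

lemma ideal_F_ideal: "subring.ideal {A. in_S d A} (F_ideal d)"
proof -
  interpret subring "{A. in_S d A}" by (rule subring_S)
  show ?thesis
    unfolding ideal_def
  proof (intro conjI ballI subsetI)
    fix x assume "x \<in> F_ideal d"
    then obtain B where B: "\<forall>j\<in>{1..d-1}. in_S d (B j)" and x: "x = (\<Sum>j\<in>{1..d-1}. B j * F d j)"
      unfolding F_ideal_def by blast
    have "(\<Sum>j\<in>{1..d-1}. B j * F d j) \<in> {A. in_S d A}"
      using B in_S_F by (intro sum_closed) (simp add: in_S_mult)
    then show "x \<in> {A. in_S d A}" using x by simp
  next
    show "0 \<in> F_ideal d"
      unfolding F_ideal_def using zero_closed by force
  next
    fix a b assume "a \<in> F_ideal d" "b \<in> F_ideal d"
    then obtain B B' where "\<forall>j\<in>{1..d-1}. in_S d (B j)" "a = (\<Sum>j\<in>{1..d-1}. B j * F d j)"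
      "\<forall>j\<in>{1..d-1}. in_S d (B' j)" "b = (\<Sum>j\<in>{1..d-1}. B' j * F d j)"
      unfolding F_ideal_def by blast
    then show "a + b \<in> F_ideal d"
      unfolding F_ideal_def
      by (intro CollectI exI[of _ "\<lambda>j. B j + B' j"]) (auto simp: sum.distrib distrib_right in_S_add)
  next
    fix t a assume t: "t \<in> {A. in_S d A}" and "a \<in> F_ideal d"
    then obtain B where "\<forall>j\<in>{1..d-1}. in_S d (B j)" "a = (\<Sum>j\<in>{1..d-1}. B j * F d j)"
      unfolding F_ideal_def by blast
    then show "t * a \<in> F_ideal d"
      unfolding F_ideal_def using t
      by (intro CollectI exI[of _ "\<lambda>j. t * B j"]) (auto simp: sum_distrib_left mult.assoc in_S_mult)
  qed
qed

lemma F_in_F_ideal: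
  assumes "j \<in> {1..d-1}"
  shows "F d j \<in> F_ideal d"
proof -
  have "(\<Sum>j'\<in>{1..d-1}. (if j' = j then 1 else 0) * F d j') = (\<Sum>j'\<in>{1..d-1}. if j' = j then F d j else 0)"
    by (intro sum.cong) auto
  also have "\<dots> = F d j"
    using assms by simp
  finally have "(\<Sum>j'\<in>{1..d-1}. (if j' = j then 1 else 0) * F d j') = F d j" .
  moreover have "in_S d (if j' = j then 1 else 0)" for j'
    using subring.zero_closed[OF subring_S] subring.one_closed[OF subring_S] by auto
  ultimately show ?thesis
    unfolding F_ideal_def by (intro CollectI exI[of _ "\<lambda>j'. if j' = j then 1 else 0"]) simp
qed

lemma var_power_combination:
  assumes "2 \<le> d"
  shows "\<exists>D\<ge>1. \<exists>B. \<forall>i\<in>{1..d-1}. (\<forall>j\<in>{1..d-1}. in_S d (B i j)) \<and>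
    var i ^ D = (\<Sum>j\<in>{1..d-1}. B i j * F d j)"
proof -
  interpret critical_points "{A. in_S d A}" d "\<lambda>k. const (1 / of_nat k)" "{1..d-1}" var "f_s d"
    by (rule critical_points_f_s[OF assms])
  have "\<exists>k. var i ^ k \<in> F_ideal d" if "i \<in> {1..d-1}" for i
    using critical_points_nilpotent[OF ideal_F_ideal _ that] F_in_F_ideal by (simp add: F_def)
  then obtain k where k: "\<And>i. i \<in> {1..d-1} \<Longrightarrow> var i ^ k i \<in> F_ideal d"
    by metis
  define D where "D = 1 + (\<Sum>i\<in>{1..d-1}. k i)"
  have "var i ^ D \<in> F_ideal d" if i: "i \<in> {1..d-1}" for i
  proof -
    have "k i \<le> D" using i by (auto simp: D_def intro!: member_le_sum le_SucI)
    then have "var i ^ D = var i ^ (D - k i) * var i ^ k i"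
      by (simp flip: power_add)
    then show ?thesis
      using ideal_mult[OF ideal_F_ideal _ k[OF i]] in_S_var[OF i] power_closed by simp
  qed
  then have "\<forall>i\<in>{1..d-1}. \<exists>Bi. (\<forall>j\<in>{1..d-1}. in_S d (Bi j)) \<and>
      var i ^ D = (\<Sum>j\<in>{1..d-1}. Bi j * F d j)"
    unfolding F_ideal_def by blast
  from bchoice[OF this] obtain B where "\<forall>i\<in>{1..d-1}. (\<forall>j\<in>{1..d-1}. in_S d (B i j)) \<and>
      var i ^ D = (\<Sum>j\<in>{1..d-1}. B i j * F d j)"
    by blast
  moreover have "D \<ge> 1" by (simp add: D_def)
  ultimately show ?thesis by blast
qed

theorem lemma2p3:
  fixes d :: nat
  assumes "d \<ge> 2"
  shows "\<exists>(D::nat) (A :: nat \<Rightarrow> nat \<Rightarrow> mpoly). D \<ge> 1 \<and>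
           (\<forall>i\<in>{1..d-1}. \<forall>j\<in>{1..d-1}. in_S d (A i j) \<and> homogeneous (int D - int d) (A i j)) \<and>
           (\<forall>i\<in>{1..d-1}. var i ^ D = (\<Sum>j\<in>{1..d-1}. A i j * F d j))"
proof -
  obtain D B where "D \<ge> 1" and B: "\<And>i. i \<in> {1..d-1} \<Longrightarrow> (\<forall>j\<in>{1..d-1}. in_S d (B i j)) \<and>
      var i ^ D = (\<Sum>j\<in>{1..d-1}. B i j * F d j)"
    using var_power_combination[OF assms] by blast
  define A where "A i j = homogeneous_part (int D - int d) (B i j)" for i j
  have "var i ^ D = (\<Sum>j\<in>{1..d-1}. A i j * F d j)" if "i \<in> {1..d-1}" for i
    unfolding A_def using assms B[OF that] homogeneous_power[OF homogeneous_var, of D i]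
    by (intro homogeneous_part_combination homogeneous_F) auto
  moreover have "in_S d (A i j) \<and> homogeneous (int D - int d) (A i j)"
    if "i \<in> {1..d-1}" "j \<in> {1..d-1}" for i j
    using B that by (simp add: A_def in_S_homogeneous_part homogeneous_homogeneous_part)
  ultimately show ?thesis
    using \<open>D \<ge> 1\<close> by blast
qed

end
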